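(* Let $n\ge 2$. For $k\ge0$ let $\mathcal R^{(N,k)}(x)=\mathcal R^{(N+k-1)}(x)\cdots\mathcal R^{(N)}(x)$ (with $\mathcal R^{(N,0)}=\mathrm{Id}$) and define the multilinear forms $\tilde Q^{(N)}_{k,n}(M_1,\dots,M_n)=Q_{0,n}\big(\mathcal R^{(N,k)}(x_1)M_1\mathcal R^{(N,k)}(x_1)^{-1},\dots,\mathcal R^{(N,k)}(x_n)M_n\mathcal R^{(N,k)}(x_n)^{-1}\big)$, so that $W_n^{(N+k)}(x_1.E_1,\dots,x_n.E_n)=\tilde Q^{(N)}_{k,n}(M^{(N)}(x_1.E_1),\dots,M^{(N)}(x_n.E_n))$. Then there exist polynomials $\tilde\alpha^{(N)}_{k,n}(x_1,\dots,x_n)\in\mathbb C[x_1,\dots,x_n]$, $k=0,\dots,(\dim\mathfrak g)^n$, not all zero and independent of $E_1,\dots,E_n$, with $\sum_k\tilde\alpha^{(N)}_{k,n}\tilde Q^{(N)}_{k,n}=0$, such that for all $E_1,\dots,E_n\in\mathfrak g$ $$\sum_{k=0}^{(\dim\mathfrak g)^n}\tilde\alpha^{(N)}_{k,n}(x_1,\dots,x_n)W_n^{(N+k)}(x_1.E_1,\dots,x_n.E_n)=0 .$$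
   Context: Let $G\subset GL(r,\mathbb C)$ be a complex reductive Lie group given in a faithful matrix representation, with Lie algebra $\mathfrak g\subset\mathfrak{gl}(r,\mathbb C)$; ${\rm Tr}$ is the matrix trace. For each integer $N$ let $\mathcal D^{(N)}(x)\in\mathfrak g$ be rational in $x$, $\Psi^{(N)}(x)$ an invertible $G$-valued solution of $\frac{d}{dx}\Psi^{(N)}=\mathcal D^{(N)}\Psi^{(N)}$, and $\Psi^{(N+1)}=\mathcal R^{(N)}(x)\Psi^{(N)}$ with $\mathcal R^{(N)}(x)$ invertible, rational in $x$ with rational inverse. For $E\in\mathfrak g$, $M^{(N)}(x.E)=\Psi^{(N)}(x)E\Psi^{(N)}(x)^{-1}$. $Q_{0,n}$ is the multilinear form $Q_{0,n}(M_1,\dots,M_n)=\sum_\sigma(-1)^\sigma\frac{{\rm Tr}\prod_{i=1}^nM_{\sigma^i(1)}}{\prod_{i=1}^n(x_i-x_{\sigma(i)})}$ (sum over permutations of $\{1,\dots,n\}$ that are a single $n$-cycle, $(-1)^\sigma$ the sign, product ordered with $i$ increasing), and $W_n^{(N)}(x_1.E_1,\dots,x_n.E_n)=Q_{0,n}(M^{(N)}(x_1.E_1),\dots,M^{(N)}(x_n.E_n))$ for pairwise distinct $x_i$ (for $n=2$ this equals ${\rm Tr}\,M^{(N)}(x_1.E_1)M^{(N)}(x_2.E_2)/(x_1-x_2)^2$). *)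

theory Defs
  imports "HOL-Analysis.Analysis" "HOL-Combinatorics.Permutations"
          "HOL-Computational_Algebra.Polynomial"
begin

type_synonym 'r cmat = "complex^'r^'r"

definition cscale :: "complex \<Rightarrow> 'r::finite cmat \<Rightarrow> 'r cmat" where
  "cscale c A = (\<chi> i j. c * A $ i $ j)"

definition csubspace :: "'r::finite cmat set \<Rightarrow> bool" where
  "csubspace V \<longleftrightarrow> 0 \<in> V \<and> (\<forall>A\<in>V. \<forall>B\<in>V. A + B \<in> V) \<and> (\<forall>c. \<forall>A\<in>V. cscale c A \<in> V)"

definition cdim :: "'r::finite cmat set \<Rightarrow> nat" where
  "cdim V = vector_space.dim cscale V"

definition bracket :: "'r::finite cmat \<Rightarrow> 'r cmat \<Rightarrow> 'r cmat" where
  "bracket A B = A ** B - B ** A"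

definition lie_subalgebra :: "'r::finite cmat set \<Rightarrow> bool" where
  "lie_subalgebra g \<longleftrightarrow> csubspace g \<and> (\<forall>A\<in>g. \<forall>B\<in>g. bracket A B \<in> g)"

text \<open>Reductive Lie algebra: the adjoint representation is completely reducible,
  i.e. every ideal (ad-invariant subspace) has an ad-invariant complement.\<close>
definition ad_invariant :: "'r::finite cmat set \<Rightarrow> 'r cmat set \<Rightarrow> bool" where
  "ad_invariant g V \<longleftrightarrow> csubspace V \<and> V \<subseteq> g \<and> (\<forall>A\<in>g. \<forall>B\<in>V. bracket A B \<in> V)"

definition reductive_lie_algebra :: "'r::finite cmat set \<Rightarrow> bool" where
  "reductive_lie_algebra g \<longleftrightarrow> lie_subalgebra g \<and>
     (\<forall>V. ad_invariant g V \<longrightarrow> (\<exists>W. ad_invariant g W \<and> V \<inter> W = {0} \<and>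
          (\<forall>A\<in>g. \<exists>B\<in>V. \<exists>C\<in>W. A = B + C)))"

text \<open>Rational (matrix-valued) functions of one complex variable; values at the
  finitely many poles are irrelevant.\<close>
definition rational_fun :: "(complex \<Rightarrow> complex) \<Rightarrow> bool" where
  "rational_fun f \<longleftrightarrow> (\<exists>p q. q \<noteq> 0 \<and> (\<forall>x. poly q x \<noteq> 0 \<longrightarrow> f x = poly p x / poly q x))"

definition rational_mat :: "(complex \<Rightarrow> 'r::finite cmat) \<Rightarrow> bool" where
  "rational_mat F \<longleftrightarrow> (\<forall>i j. rational_fun (\<lambda>x. F x $ i $ j))"

text \<open>Polynomial functions in the variables x_0,...,x_(n-1) (= C[x_1,...,x_n]).\<close>
inductive_set polyfun :: "nat \<Rightarrow> ((nat \<Rightarrow> complex) \<Rightarrow> complex) set" for n :: nat where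
  pconst: "(\<lambda>x. c) \<in> polyfun n"
| pvar: "i < n \<Longrightarrow> (\<lambda>x. x i) \<in> polyfun n"
| padd: "p \<in> polyfun n \<Longrightarrow> q \<in> polyfun n \<Longrightarrow> (\<lambda>x. p x + q x) \<in> polyfun n"
| pmult: "p \<in> polyfun n \<Longrightarrow> q \<in> polyfun n \<Longrightarrow> (\<lambda>x. p x * q x) \<in> polyfun n"

definition mprod_list :: "'r::finite cmat list \<Rightarrow> 'r cmat" where
  "mprod_list As = foldr (\<lambda>A B. A ** B) As (mat 1)"

definition is_ncycle :: "nat \<Rightarrow> (nat \<Rightarrow> nat) \<Rightarrow> bool" where
  "is_ncycle n \<sigma> \<longleftrightarrow> \<sigma> permutes {..<n} \<and> {(\<sigma> ^^ k) 0 | k. True} = {..<n}"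

text \<open>Q_{0,n}, with indices shifted to 0,...,n-1.\<close>
definition Q0 :: "nat \<Rightarrow> (nat \<Rightarrow> complex) \<Rightarrow> (nat \<Rightarrow> 'r::finite cmat) \<Rightarrow> complex" where
  "Q0 n x M = (\<Sum>\<sigma>\<in>{\<sigma>. is_ncycle n \<sigma>}.
      of_int (sign \<sigma>) * trace (mprod_list (map (\<lambda>i. M ((\<sigma> ^^ i) 0)) [1..<n+1]))
      / (\<Prod>i<n. (x i - x (\<sigma> i))))"

fun Rprod :: "(int \<Rightarrow> complex \<Rightarrow> 'r::finite cmat) \<Rightarrow> int \<Rightarrow> nat \<Rightarrow> complex \<Rightarrow> 'r cmat" where
  "Rprod R N 0 x = mat 1"
| "Rprod R N (Suc k) x = R (N + int k) x ** Rprod R N k x"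

definition Qtilde :: "(int \<Rightarrow> complex \<Rightarrow> 'r::finite cmat) \<Rightarrow> int \<Rightarrow> nat \<Rightarrow> nat
    \<Rightarrow> (nat \<Rightarrow> complex) \<Rightarrow> (nat \<Rightarrow> 'r cmat) \<Rightarrow> complex" where
  "Qtilde R N k n x M = Q0 n x (\<lambda>i. Rprod R N k (x i) ** M i ** matrix_inv (Rprod R N k (x i)))"

definition Mfun :: "(int \<Rightarrow> complex \<Rightarrow> 'r::finite cmat) \<Rightarrow> int \<Rightarrow> complex \<Rightarrow> 'r cmat \<Rightarrow> 'r cmat" where
  "Mfun \<Psi> N x E = \<Psi> N x ** E ** matrix_inv (\<Psi> N x)"

definition Wn :: "(int \<Rightarrow> complex \<Rightarrow> 'r::finite cmat) \<Rightarrow> int \<Rightarrow> nat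
    \<Rightarrow> (nat \<Rightarrow> complex) \<Rightarrow> (nat \<Rightarrow> 'r cmat) \<Rightarrow> complex" where
  "Wn \<Psi> N n x E = Q0 n x (\<lambda>i. Mfun \<Psi> N (x i) (E i))"

end

(*
  For fixed points x, each form Qtilde_k is multilinear in (M_1, ..., M_n) in g^n, so it is
  determined by its values on the d^n tuples of basis elements (d = dim g).  These values are
  rational in x, because R^(N,k) and its inverse are rational.  Thus the d^n + 1 forms
  k = 0, ..., d^n are vectors of length d^n over the rational functions, hence linearly
  dependent; clearing denominators and eliminating without fractions gives polynomial
  coefficients, not all zero because polynomial functions have no zero divisors.  Finally
  Psi^(N+k) = R^(N,k) Psi^(N) turns W_n^(N+k) into Qtilde_k evaluated at M^(N) in g^n.
*)
theory Submission
  imports Defs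
begin

section \<open>Polynomial functions and fraction-free elimination\<close>

lemma polyfun_neg: "p \<in> polyfun n \<Longrightarrow> (\<lambda>x. - p x) \<in> polyfun n"
  using polyfun.pmult[OF polyfun.pconst[of "-1"]] by simp

lemma polyfun_diff: "p \<in> polyfun n \<Longrightarrow> q \<in> polyfun n \<Longrightarrow> (\<lambda>x. p x - q x) \<in> polyfun n"
  using polyfun.padd[OF _ polyfun_neg] by simp

lemma polyfun_sum:
  "finite A \<Longrightarrow> (\<And>a. a \<in> A \<Longrightarrow> f a \<in> polyfun n) \<Longrightarrow> (\<lambda>x. \<Sum>a\<in>A. f a x) \<in> polyfun n"
  by (induction A rule: finite_induct) (auto intro: polyfun.intros)

lemma polyfun_prod:
  "finite A \<Longrightarrow> (\<And>a. a \<in> A \<Longrightarrow> f a \<in> polyfun n) \<Longrightarrow> (\<lambda>x. \<Prod>a\<in>A. f a x) \<in> polyfun n"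
  by (induction A rule: finite_induct) (auto intro: polyfun.intros)

lemma polyfun_poly_var: "i < n \<Longrightarrow> (\<lambda>x. poly p (x i)) \<in> polyfun n"
  by (induction p) (auto intro!: polyfun.padd polyfun.pmult polyfun.pconst polyfun.pvar)

lemma polyfun_on_line:
  assumes "p \<in> polyfun n"
  shows "\<exists>P. \<forall>t. p (\<lambda>i. a i + t * (c i - a i)) = poly P t"
  using assms
proof induction
  case (pconst c)
  show ?case by (rule exI[of _ "[:c:]"]) simp
next
  case (pvar i)
  show ?case by (rule exI[of _ "[:a i, c i - a i:]"]) (simp add: algebra_simps)
next
  case (padd p q)
  then obtain P Q where "\<forall>t. p (\<lambda>i. a i + t * (c i - a i)) = poly P t"
    and "\<forall>t. q (\<lambda>i. a i + t * (c i - a i)) = poly Q t" by blast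
  then show ?case by (intro exI[of _ "P + Q"]) simp
next
  case (pmult p q)
  then obtain P Q where "\<forall>t. p (\<lambda>i. a i + t * (c i - a i)) = poly P t"
    and "\<forall>t. q (\<lambda>i. a i + t * (c i - a i)) = poly Q t" by blast
  then show ?case by (intro exI[of _ "P * Q"]) simp
qed

text \<open>Restrict both factors to the line through two points where they do not vanish and use
  that \<open>complex poly\<close> is an integral domain.\<close>
lemma polyfun_mult_nonzero:
  assumes p: "p \<in> polyfun n" and q: "q \<in> polyfun n" and "p a \<noteq> 0" and "q c \<noteq> 0"
  shows "\<exists>x. p x * q x \<noteq> 0"
proof (rule ccontr)
  assume "\<nexists>x. p x * q x \<noteq> 0"
  obtain P where P: "\<forall>t. p (\<lambda>i. a i + t * (c i - a i)) = poly P t"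
    using polyfun_on_line[OF p] by blast
  obtain Q where Q: "\<forall>t. q (\<lambda>i. a i + t * (c i - a i)) = poly Q t"
    using polyfun_on_line[OF q] by blast
  have "poly (P * Q) t = 0" for t
    using \<open>\<nexists>x. p x * q x \<noteq> 0\<close> P Q by (metis poly_mult)
  then have "P = 0 \<or> Q = 0"
    using poly_all_0_iff_0 by (metis mult_eq_0_iff)
  moreover have "poly P 0 = p a" and "poly Q 1 = q c"
    using P[rule_format, of 0] Q[rule_format, of 1] by simp_all
  ultimately show False
    using \<open>p a \<noteq> 0\<close> \<open>q c \<noteq> 0\<close> by auto
qed

text \<open>One step of fraction-free Gaussian elimination with pivot \<open>a = A i0 j0\<close>.\<close>
lemma sum_pivot_elimination:
  fixes A :: "'i \<Rightarrow> 'j \<Rightarrow> 'a::comm_ring"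
  assumes "finite J" "j0 \<in> J"
  shows "(\<Sum>j\<in>J. A i j * (if j = j0 then - (\<Sum>l\<in>J - {j0}. A i0 l * \<beta> l) else a * \<beta> j))
    = (\<Sum>l\<in>J - {j0}. (a * A i l - A i j0 * A i0 l) * \<beta> l)"
proof -
  have "(\<Sum>j\<in>J. A i j * (if j = j0 then - (\<Sum>l\<in>J - {j0}. A i0 l * \<beta> l) else a * \<beta> j))
      = A i j0 * - (\<Sum>l\<in>J - {j0}. A i0 l * \<beta> l) + (\<Sum>l\<in>J - {j0}. A i l * (a * \<beta> l))"
    using assms by (simp add: sum.remove[of J j0])
  also have "\<dots> = (\<Sum>l\<in>J - {j0}. a * A i l * \<beta> l) - (\<Sum>l\<in>J - {j0}. A i j0 * A i0 l * \<beta> l)"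
    by (simp add: sum_distrib_left ac_simps)
  also have "\<dots> = (\<Sum>l\<in>J - {j0}. (a * A i l - A i j0 * A i0 l) * \<beta> l)"
    by (simp add: left_diff_distrib sum_subtractf)
  finally show ?thesis .
qed

lemma polyfun_back_substitution:
  assumes "finite J" "j0 \<in> J" "a \<in> polyfun n" "a x0 \<noteq> 0" "\<forall>l\<in>J. c l \<in> polyfun n"
    and "\<forall>j\<in>J - {j0}. \<beta> j \<in> polyfun n" "\<exists>j\<in>J - {j0}. \<exists>x. \<beta> j x \<noteq> 0"
  defines "\<alpha> \<equiv> \<lambda>j x. if j = j0 then - (\<Sum>l\<in>J - {j0}. c l x * \<beta> l x) else a x * \<beta> j x"
  shows "\<forall>j\<in>J. \<alpha> j \<in> polyfun n" and "\<exists>j\<in>J. \<exists>x. \<alpha> j x \<noteq> 0"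
proof -
  have "(\<lambda>x. \<Sum>l\<in>J - {j0}. c l x * \<beta> l x) \<in> polyfun n"
    using assms(1,5,6) by (intro polyfun_sum) (auto intro: polyfun.pmult)
  then have "\<alpha> j \<in> polyfun n" if "j \<in> J" for j
    using assms(3,6) that polyfun_neg[of _ n] polyfun.pmult[of a n "\<beta> j"]
    by (cases "j = j0") (simp_all add: \<alpha>_def)
  then show "\<forall>j\<in>J. \<alpha> j \<in> polyfun n" ..
  obtain j1 x1 where j1: "j1 \<in> J - {j0}" and "\<beta> j1 x1 \<noteq> 0"
    using assms(7) by blast
  then obtain y where "a y * \<beta> j1 y \<noteq> 0"
    using polyfun_mult_nonzero[OF assms(3)] assms(4,6) by blast
  then show "\<exists>j\<in>J. \<exists>x. \<alpha> j x \<noteq> 0"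
    using j1 by (auto simp: \<alpha>_def)
qed

lemma polyfun_linear_system_nontrivial_solution:
  assumes "finite I" "finite J" "card I < card J" "\<forall>i\<in>I. \<forall>j\<in>J. A i j \<in> polyfun n"
  shows "\<exists>\<alpha>. (\<forall>j\<in>J. \<alpha> j \<in> polyfun n) \<and> (\<exists>j\<in>J. \<exists>x. \<alpha> j x \<noteq> 0) \<and>
    (\<forall>i\<in>I. \<forall>x. (\<Sum>j\<in>J. A i j x * \<alpha> j x) = 0)"
  using assms
proof (induction I arbitrary: J A rule: finite_induct)
  case empty
  then obtain j0 where "j0 \<in> J"
    by (metis card.empty card_gt_0_iff ex_in_conv)
  then show ?case
    by (intro exI[of _ "\<lambda>j x. if j = j0 then 1 else 0"]) (auto intro: polyfun.pconst)
next
  case (insert i0 I)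
  show ?case
  proof (cases "\<forall>j\<in>J. \<forall>x. A i0 j x = 0")
    case True
    have "card I < card J"
      using insert by simp
    with insert.IH[of J A] insert.prems show ?thesis
      using True by auto
  next
    case False
    then obtain j0 x0 where j0: "j0 \<in> J" and x0: "A i0 j0 x0 \<noteq> 0" by blast
    define a where "a = A i0 j0"
    define A' where "A' i j x = a x * A i j x - A i j0 x * A i0 j x" for i j x
    have a: "a \<in> polyfun n"
      using insert.prems j0 by (simp add: a_def)
    have "card I < card (J - {j0})"
      using insert j0 by simp
    moreover have "\<forall>i\<in>I. \<forall>j\<in>J - {j0}. A' i j \<in> polyfun n"
      using insert.prems j0 a unfolding A'_def by (auto intro!: polyfun_diff polyfun.pmult)
    ultimately obtain \<beta> where \<beta>: "\<forall>j\<in>J - {j0}. \<beta> j \<in> polyfun n" "\<exists>j\<in>J - {j0}. \<exists>x. \<beta> j x \<noteq> 0"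
      "\<forall>i\<in>I. \<forall>x. (\<Sum>j\<in>J - {j0}. A' i j x * \<beta> j x) = 0"
      using insert.IH[of "J - {j0}" A'] insert.prems(1) by auto
    define \<alpha> where "\<alpha> = (\<lambda>j x. if j = j0 then - (\<Sum>l\<in>J - {j0}. A i0 l x * \<beta> l x) else a x * \<beta> j x)"
    have "(\<Sum>j\<in>J. A i j x * \<alpha> j x) = (\<Sum>l\<in>J - {j0}. A' i l x * \<beta> l x)" for i x
      unfolding \<alpha>_def A'_def a_def by (rule sum_pivot_elimination[OF insert.prems(1) j0])
    then have "\<forall>i\<in>insert i0 I. \<forall>x. (\<Sum>j\<in>J. A i j x * \<alpha> j x) = 0"
      using \<beta>(3) by (simp add: A'_def a_def)
    moreover have "\<forall>j\<in>J. \<alpha> j \<in> polyfun n" "\<exists>j\<in>J. \<exists>x. \<alpha> j x \<noteq> 0"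
      using polyfun_back_substitution[OF insert.prems(1) j0 a x0[folded a_def] _ \<beta>(1,2), of "A i0"]
        insert.prems(3)
      unfolding \<alpha>_def by simp_all
    ultimately show ?thesis by blast
  qed
qed

section \<open>Rational matrix functions of one variable\<close>

lemma rational_fun_const: "rational_fun (\<lambda>y. c)"
  unfolding rational_fun_def by (intro exI[of _ "[:c:]"] exI[of _ 1]) simp

lemma rational_fun_add:
  assumes "rational_fun f" "rational_fun g"
  shows "rational_fun (\<lambda>y. f y + g y)"
proof -
  obtain p q p' q' where "q \<noteq> 0" "\<forall>y. poly q y \<noteq> 0 \<longrightarrow> f y = poly p y / poly q y"
    and "q' \<noteq> 0" "\<forall>y. poly q' y \<noteq> 0 \<longrightarrow> g y = poly p' y / poly q' y"
    using assms unfolding rational_fun_def by blast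
  then show ?thesis
    unfolding rational_fun_def
    by (intro exI[of _ "p * q' + p' * q"] exI[of _ "q * q'"]) (auto simp: field_simps)
qed

lemma rational_fun_mult:
  assumes "rational_fun f" "rational_fun g"
  shows "rational_fun (\<lambda>y. f y * g y)"
proof -
  obtain p q p' q' where "q \<noteq> 0" "\<forall>y. poly q y \<noteq> 0 \<longrightarrow> f y = poly p y / poly q y"
    and "q' \<noteq> 0" "\<forall>y. poly q' y \<noteq> 0 \<longrightarrow> g y = poly p' y / poly q' y"
    using assms unfolding rational_fun_def by blast
  then show ?thesis
    unfolding rational_fun_def
    by (intro exI[of _ "p * p'"] exI[of _ "q * q'"]) auto
qed

lemma rational_fun_sum:
  "finite A \<Longrightarrow> (\<And>a. a \<in> A \<Longrightarrow> rational_fun (f a)) \<Longrightarrow> rational_fun (\<lambda>y. \<Sum>a\<in>A. f a y)"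
  by (induction A rule: finite_induct) (auto intro: rational_fun_const rational_fun_add)

text \<open>Multiply numerator and denominator by a polynomial vanishing on \<open>F\<close>.\<close>
lemma rational_fun_cong_finite:
  assumes "rational_fun f" "finite F" "\<forall>y. y \<notin> F \<longrightarrow> f y = g y"
  shows "rational_fun g"
proof -
  obtain p q where "q \<noteq> 0" and pq: "\<forall>y. poly q y \<noteq> 0 \<longrightarrow> f y = poly p y / poly q y"
    using assms(1) unfolding rational_fun_def by blast
  define r where "r = (\<Prod>a\<in>F. [:- a, 1:])"
  have "r \<noteq> 0"
    using assms(2) by (simp add: r_def)
  have "y \<notin> F" if "poly r y \<noteq> 0" for y
    using that assms(2) by (auto simp: r_def poly_prod)
  then have "\<forall>y. poly (q * r) y \<noteq> 0 \<longrightarrow> g y = poly (p * r) y / poly (q * r) y"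
    using pq assms(3) by auto
  with \<open>q \<noteq> 0\<close> \<open>r \<noteq> 0\<close> show ?thesis
    unfolding rational_fun_def by (metis mult_eq_0_iff)
qed

lemma rational_mat_const: "rational_mat (\<lambda>y. C)"
  unfolding rational_mat_def by (simp add: rational_fun_const)

lemma rational_mat_mult:
  "rational_mat A \<Longrightarrow> rational_mat B \<Longrightarrow> rational_mat (\<lambda>y. A y ** B y)"
  unfolding rational_mat_def matrix_matrix_mult_def
  by (auto intro!: rational_fun_sum rational_fun_mult)

lemma rational_mat_cong_finite:
  assumes "rational_mat A" "finite F" "\<forall>y. y \<notin> F \<longrightarrow> A y = B y"
  shows "rational_mat B"
  unfolding rational_mat_def
proof (intro allI)
  fix i j
  show "rational_fun (\<lambda>y. B y $ i $ j)"
    by (rule rational_fun_cong_finite[of "\<lambda>y. A y $ i $ j" F])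
      (use assms in \<open>auto simp: rational_mat_def\<close>)
qed

lemma matrix_inv_inverse:
  fixes A :: "'a::field^'n^'n"
  assumes "invertible A"
  shows "A ** matrix_inv A = mat 1" and "matrix_inv A ** A = mat 1"
  using someI_ex[OF assms[unfolded invertible_def]] unfolding matrix_inv_def by blast+

lemma matrix_inv_eqI:
  fixes A B :: "'a::field^'n^'n"
  assumes "A ** B = mat 1"
  shows "invertible A" and "matrix_inv A = B"
proof -
  show inv: "invertible A"
    using assms invertible_right_inverse by blast
  have "matrix_inv A = matrix_inv A ** (A ** B)"
    using assms by simp
  also have "\<dots> = B"
    using matrix_inv_inverse(2)[OF inv] by (simp add: matrix_mul_assoc)
  finally show "matrix_inv A = B" .
qed

lemma matrix_inv_mult:
  fixes A B :: "'a::field^'n^'n"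
  assumes "invertible A" "invertible B"
  shows "matrix_inv (A ** B) = matrix_inv B ** matrix_inv A"
proof (rule matrix_inv_eqI(2))
  have "A ** B ** (matrix_inv B ** matrix_inv A) = A ** (B ** matrix_inv B) ** matrix_inv A"
    by (simp add: matrix_mul_assoc)
  then show "A ** B ** (matrix_inv B ** matrix_inv A) = mat 1"
    using assms by (simp add: matrix_inv_inverse)
qed

definition rational_invertible :: "(complex \<Rightarrow> 'r::finite cmat) \<Rightarrow> bool" where
  "rational_invertible A \<longleftrightarrow> rational_mat A \<and> rational_mat (\<lambda>y. matrix_inv (A y)) \<and>
     finite {y. \<not> invertible (A y)}"

lemma rational_invertible_if_right_inverse:
  assumes "rational_mat A" "rational_mat S" "finite {y. A y ** S y \<noteq> mat 1}"
  shows "rational_invertible A"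
proof -
  have "{y. \<not> invertible (A y)} \<subseteq> {y. A y ** S y \<noteq> mat 1}"
    using matrix_inv_eqI(1) by blast
  moreover have "rational_mat (\<lambda>y. matrix_inv (A y))"
    by (rule rational_mat_cong_finite[OF assms(2,3)]) (auto intro: matrix_inv_eqI(2)[symmetric])
  ultimately show ?thesis
    using assms rational_invertible_def finite_subset by blast
qed

lemma rational_invertible_mult:
  assumes "rational_invertible A" "rational_invertible B"
  shows "rational_invertible (\<lambda>y. A y ** B y)"
proof -
  let ?F = "{y. \<not> invertible (A y)} \<union> {y. \<not> invertible (B y)}"
  have "{y. \<not> invertible (A y ** B y)} \<subseteq> ?F"
    using invertible_mult by blast
  moreover have "rational_mat (\<lambda>y. matrix_inv (A y ** B y))"
  proof (rule rational_mat_cong_finite)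
    show "rational_mat (\<lambda>y. matrix_inv (B y) ** matrix_inv (A y))"
      using assms by (simp add: rational_invertible_def rational_mat_mult)
    show "finite ?F"
      using assms by (simp add: rational_invertible_def)
  qed (simp add: matrix_inv_mult)
  ultimately show ?thesis
    using assms unfolding rational_invertible_def by (auto intro: rational_mat_mult finite_subset)
qed

lemma rational_invertible_Rprod:
  fixes R :: "int \<Rightarrow> complex \<Rightarrow> 'r::finite cmat"
  shows "(\<And>m. rational_invertible (R m)) \<Longrightarrow> rational_invertible (Rprod R N k)"
proof (induction k)
  case 0
  have "matrix_inv (mat 1 :: 'r cmat) = mat 1" "invertible (mat 1 :: 'r cmat)"
    using matrix_inv_eqI[of "mat 1" "mat 1"] by simp_all
  then show ?case
    by (simp add: rational_invertible_def rational_mat_const)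
next
  case (Suc k)
  then show ?case
    using rational_invertible_mult[of "R (N + int k)" "Rprod R N k"] by (simp add: comp_def)
qed

section \<open>Rational functions of the points \<open>x\<close>\<close>

text \<open>The set \<open>S\<close> collects the poles of the gauge matrices and of their inverses; admissible
  points also avoid the diagonals \<open>x i = x j\<close>, where \<open>Q0\<close> has its poles.\<close>

definition admissible :: "nat \<Rightarrow> complex set \<Rightarrow> (nat \<Rightarrow> complex) \<Rightarrow> bool" where
  "admissible n S x \<longleftrightarrow> (\<forall>i<n. \<forall>j<n. i \<noteq> j \<longrightarrow> x i \<noteq> x j) \<and> (\<forall>i<n. x i \<notin> S)"

definition rational_on :: "nat \<Rightarrow> complex set \<Rightarrow> ((nat \<Rightarrow> complex) \<Rightarrow> complex) \<Rightarrow> bool" where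
  "rational_on n S f \<longleftrightarrow>
     (\<exists>p\<in>polyfun n. \<exists>q\<in>polyfun n. \<forall>x. admissible n S x \<longrightarrow> q x \<noteq> 0 \<and> f x = p x / q x)"

definition rational_mat_on :: "nat \<Rightarrow> complex set \<Rightarrow> ((nat \<Rightarrow> complex) \<Rightarrow> 'r::finite cmat) \<Rightarrow> bool" where
  "rational_mat_on n S A \<longleftrightarrow> (\<forall>i j. rational_on n S (\<lambda>x. A x $ i $ j))"

lemma rational_onI:
  "p \<in> polyfun n \<Longrightarrow> q \<in> polyfun n \<Longrightarrow> (\<And>x. admissible n S x \<Longrightarrow> q x \<noteq> 0 \<and> f x = p x / q x)
    \<Longrightarrow> rational_on n S f"
  unfolding rational_on_def by blast

lemma rational_onE:
  assumes "rational_on n S f"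
  obtains p q where "p \<in> polyfun n" "q \<in> polyfun n"
    "\<And>x. admissible n S x \<Longrightarrow> q x \<noteq> 0" "\<And>x. admissible n S x \<Longrightarrow> f x = p x / q x"
  using assms unfolding rational_on_def by blast

lemma rational_on_const: "rational_on n S (\<lambda>x. c)"
  by (rule rational_onI[OF polyfun.pconst[of c] polyfun.pconst[of 1]]) simp

lemma rational_on_add:
  assumes "rational_on n S f" "rational_on n S g"
  shows "rational_on n S (\<lambda>x. f x + g x)"
proof -
  obtain p q where p: "p \<in> polyfun n" "q \<in> polyfun n"
    "\<And>x. admissible n S x \<Longrightarrow> q x \<noteq> 0" "\<And>x. admissible n S x \<Longrightarrow> f x = p x / q x"
    using rational_onE[OF assms(1)] by blast
  obtain p' q' where p': "p' \<in> polyfun n" "q' \<in> polyfun n"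
    "\<And>x. admissible n S x \<Longrightarrow> q' x \<noteq> 0" "\<And>x. admissible n S x \<Longrightarrow> g x = p' x / q' x"
    using rational_onE[OF assms(2)] by blast
  show ?thesis
  proof (rule rational_onI)
    show "(\<lambda>x. p x * q' x + p' x * q x) \<in> polyfun n" "(\<lambda>x. q x * q' x) \<in> polyfun n"
      using p p' by (auto intro: polyfun.padd polyfun.pmult)
    fix x assume "admissible n S x"
    then show "q x * q' x \<noteq> 0 \<and> f x + g x = (p x * q' x + p' x * q x) / (q x * q' x)"
      using p(3,4) p'(3,4) by (simp add: field_simps)
  qed
qed

lemma rational_on_mult:
  assumes "rational_on n S f" "rational_on n S g"
  shows "rational_on n S (\<lambda>x. f x * g x)"
proof -
  obtain p q where p: "p \<in> polyfun n" "q \<in> polyfun n"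
    "\<And>x. admissible n S x \<Longrightarrow> q x \<noteq> 0" "\<And>x. admissible n S x \<Longrightarrow> f x = p x / q x"
    using rational_onE[OF assms(1)] by blast
  obtain p' q' where p': "p' \<in> polyfun n" "q' \<in> polyfun n"
    "\<And>x. admissible n S x \<Longrightarrow> q' x \<noteq> 0" "\<And>x. admissible n S x \<Longrightarrow> g x = p' x / q' x"
    using rational_onE[OF assms(2)] by blast
  show ?thesis
  proof (rule rational_onI)
    show "(\<lambda>x. p x * p' x) \<in> polyfun n" "(\<lambda>x. q x * q' x) \<in> polyfun n"
      using p p' by (auto intro: polyfun.pmult)
    fix x assume "admissible n S x"
    then show "q x * q' x \<noteq> 0 \<and> f x * g x = p x * p' x / (q x * q' x)"
      using p(3,4) p'(3,4) by simp
  qed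
qed

lemma rational_on_divide_polyfun:
  assumes "rational_on n S f" "d \<in> polyfun n" "\<And>x. admissible n S x \<Longrightarrow> d x \<noteq> 0"
  shows "rational_on n S (\<lambda>x. f x / d x)"
proof -
  obtain p q where p: "p \<in> polyfun n" "q \<in> polyfun n"
    "\<And>x. admissible n S x \<Longrightarrow> q x \<noteq> 0" "\<And>x. admissible n S x \<Longrightarrow> f x = p x / q x"
    using rational_onE[OF assms(1)] by blast
  show ?thesis
  proof (rule rational_onI)
    show "p \<in> polyfun n" "(\<lambda>x. q x * d x) \<in> polyfun n"
      using p assms(2) by (auto intro: polyfun.pmult)
    fix x assume "admissible n S x"
    then show "q x * d x \<noteq> 0 \<and> f x / d x = p x / (q x * d x)"
      using p(3,4) assms(3) by simp
  qed
qed

lemma rational_on_sum: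
  "finite A \<Longrightarrow> (\<And>a. a \<in> A \<Longrightarrow> rational_on n S (f a)) \<Longrightarrow> rational_on n S (\<lambda>x. \<Sum>a\<in>A. f a x)"
  by (induction A rule: finite_induct) (auto intro: rational_on_const rational_on_add)

lemma rational_on_rational_fun:
  assumes "rational_fun f"
  shows "\<exists>F. finite F \<and> (\<forall>S i. F \<subseteq> S \<longrightarrow> i < n \<longrightarrow> rational_on n S (\<lambda>x. f (x i)))"
proof -
  obtain p q where "q \<noteq> 0" and pq: "\<forall>y. poly q y \<noteq> 0 \<longrightarrow> f y = poly p y / poly q y"
    using assms unfolding rational_fun_def by blast
  have "rational_on n S (\<lambda>x. f (x i))" if "{y. poly q y = 0} \<subseteq> S" "i < n" for S i
    using that pq
    by (intro rational_onI[OF polyfun_poly_var polyfun_poly_var]) (auto simp: admissible_def)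
  with poly_roots_finite[OF \<open>q \<noteq> 0\<close>] show ?thesis
    by blast
qed

lemma rational_mat_on_rational_mat:
  fixes A :: "complex \<Rightarrow> 'r::finite cmat"
  assumes "rational_mat A"
  shows "\<exists>F. finite F \<and> (\<forall>S i. F \<subseteq> S \<longrightarrow> i < n \<longrightarrow> rational_mat_on n S (\<lambda>x. A (x i)))"
proof -
  have "\<forall>ab. \<exists>F. finite F \<and>
      (\<forall>S i. F \<subseteq> S \<longrightarrow> i < n \<longrightarrow> rational_on n S (\<lambda>x. A (x i) $ fst ab $ snd ab))"
    using assms rational_on_rational_fun unfolding rational_mat_def by blast
  then obtain F where F: "\<forall>ab. finite (F ab) \<and>
      (\<forall>S i. F ab \<subseteq> S \<longrightarrow> i < n \<longrightarrow> rational_on n S (\<lambda>x. A (x i) $ fst ab $ snd ab))"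
    by (rule choice[THEN exE])
  have "rational_mat_on n S (\<lambda>x. A (x i))" if "(\<Union>ab. F ab) \<subseteq> S" "i < n" for S i
    unfolding rational_mat_on_def
  proof (intro allI)
    fix a b
    show "rational_on n S (\<lambda>x. A (x i) $ a $ b)"
      using spec[OF F, of "(a, b)"] that by (simp add: UN_subset_iff)
  qed
  moreover have "finite (\<Union>ab. F ab)"
    using F by simp
  ultimately show ?thesis
    by blast
qed

lemma rational_mat_on_const: "rational_mat_on n S (\<lambda>x. C)"
  unfolding rational_mat_on_def by (simp add: rational_on_const)

lemma rational_mat_on_mult:
  "rational_mat_on n S A \<Longrightarrow> rational_mat_on n S B \<Longrightarrow> rational_mat_on n S (\<lambda>x. A x ** B x)"
  unfolding rational_mat_on_def matrix_matrix_mult_def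
  by (auto intro!: rational_on_sum rational_on_mult)

lemma rational_on_trace: "rational_mat_on n S A \<Longrightarrow> rational_on n S (\<lambda>x. trace (A x))"
  unfolding rational_mat_on_def trace_def by (auto intro!: rational_on_sum)

lemma rational_mat_on_mprod_list:
  "(\<And>i. i \<in> set L \<Longrightarrow> rational_mat_on n S (M i)) \<Longrightarrow>
    rational_mat_on n S (\<lambda>x. mprod_list (map (\<lambda>i. M i x) L))"
  by (induction L) (auto simp: mprod_list_def intro: rational_mat_on_const rational_mat_on_mult)

lemma finite_ncycles: "finite {\<sigma>. is_ncycle n \<sigma>}"
  by (rule finite_subset[OF _ finite_permutations[of "{..<n}"]]) (auto simp: is_ncycle_def)

lemma rational_on_Q0:
  assumes "\<And>i. i < n \<Longrightarrow> rational_mat_on n S (M i)"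
  shows "rational_on n S (\<lambda>x. Q0 n x (\<lambda>i. M i x))"
  unfolding Q0_def
proof (intro rational_on_sum[OF finite_ncycles])
  fix \<sigma> assume "\<sigma> \<in> {\<sigma>. is_ncycle n \<sigma>}"
  then have orbit: "(\<sigma> ^^ i) 0 < n" and perm: "\<sigma> permutes {..<n}" for i
    unfolding is_ncycle_def by blast+
  have \<sigma>_lt: "\<sigma> i < n" if "i < n" for i
    using permutes_in_image[OF perm] that by blast
  have "rational_mat_on n S (\<lambda>x. mprod_list (map (\<lambda>i. M ((\<sigma> ^^ i) 0) x) [1..<n+1]))"
    by (rule rational_mat_on_mprod_list) (use assms orbit in blast)
  then have numerator:
    "rational_on n S (\<lambda>x. of_int (sign \<sigma>) * trace (mprod_list (map (\<lambda>i. M ((\<sigma> ^^ i) 0) x) [1..<n+1])))"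
    by (intro rational_on_mult rational_on_const rational_on_trace)
  consider "\<forall>i<n. \<sigma> i \<noteq> i" | i where "i < n" "\<sigma> i = i"
    by blast
  then show "rational_on n S (\<lambda>x. of_int (sign \<sigma>) * trace (mprod_list (map (\<lambda>i. M ((\<sigma> ^^ i) 0) x) [1..<n+1]))
      / (\<Prod>i<n. x i - x (\<sigma> i)))"
  proof cases
    case 1
    have "(\<lambda>x. \<Prod>i<n. x i - x (\<sigma> i)) \<in> polyfun n"
      using \<sigma>_lt by (intro polyfun_prod polyfun_diff polyfun.pvar) auto
    moreover have "(\<Prod>i<n. x i - x (\<sigma> i)) \<noteq> 0" if "admissible n S x" for x
      using 1 \<sigma>_lt that by (auto simp: admissible_def)
    ultimately show ?thesis
      using rational_on_divide_polyfun numerator by blast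
  next
    case 2 \<comment> \<open>only for \<open>n = 1\<close>: the summand is \<open>_ / 0 = 0\<close>\<close>
    then have "(\<Prod>i<n. x i - x (\<sigma> i)) = 0" for x :: "nat \<Rightarrow> complex"
      by (auto intro!: prod_zero bexI[of _ i])
    then show ?thesis
      by (simp only: division_ring_divide_zero rational_on_const)
  qed
qed

lemma rational_on_Q0_conj:
  fixes P :: "complex \<Rightarrow> 'r::finite cmat"
  assumes "rational_invertible P"
  shows "\<exists>F. finite F \<and> (\<forall>y. y \<notin> F \<longrightarrow> invertible (P y)) \<and>
    (\<forall>S M. F \<subseteq> S \<longrightarrow> rational_on n S (\<lambda>x. Q0 n x (\<lambda>i. P (x i) ** M i ** matrix_inv (P (x i)))))"
proof -
  have "rational_mat P" "rational_mat (\<lambda>y. matrix_inv (P y))" "finite {y. \<not> invertible (P y)}"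
    using assms by (simp_all add: rational_invertible_def)
  obtain F1 where F1: "finite F1" "\<forall>S i. F1 \<subseteq> S \<longrightarrow> i < n \<longrightarrow> rational_mat_on n S (\<lambda>x. P (x i))"
    using rational_mat_on_rational_mat[OF \<open>rational_mat P\<close>, of n] by blast
  obtain F2 where F2: "finite F2"
    "\<forall>S i. F2 \<subseteq> S \<longrightarrow> i < n \<longrightarrow> rational_mat_on n S (\<lambda>x. matrix_inv (P (x i)))"
    using rational_mat_on_rational_mat[OF \<open>rational_mat (\<lambda>y. matrix_inv (P y))\<close>, of n] by blast
  define F where "F = F1 \<union> F2 \<union> {y. \<not> invertible (P y)}"
  have "rational_on n S (\<lambda>x. Q0 n x (\<lambda>i. P (x i) ** M i ** matrix_inv (P (x i))))"
    if "F \<subseteq> S" for S M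
  proof (rule rational_on_Q0)
    fix i assume "i < n"
    with F1(2) F2(2) that show "rational_mat_on n S (\<lambda>x. P (x i) ** M i ** matrix_inv (P (x i)))"
      unfolding F_def by (intro rational_mat_on_mult rational_mat_on_const) auto
  qed
  moreover have "finite F"
    using F1(1) F2(1) \<open>finite {y. \<not> invertible (P y)}\<close> by (simp add: F_def)
  moreover have "\<forall>y. y \<notin> F \<longrightarrow> invertible (P y)"
    by (simp add: F_def)
  ultimately show ?thesis
    by blast
qed

lemma rational_on_common_denominator:
  assumes "finite K" "\<And>k. k \<in> K \<Longrightarrow> rational_on n S (f k)"
  shows "\<exists>q\<in>polyfun n. \<exists>p. (\<forall>k\<in>K. p k \<in> polyfun n) \<and>
    (\<forall>x. admissible n S x \<longrightarrow> q x \<noteq> 0 \<and> (\<forall>k\<in>K. f k x = p k x / q x))"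
  using assms
proof (induction K rule: finite_induct)
  case empty
  show ?case
    by (intro bexI[of _ "\<lambda>x. 1"]) (auto intro: polyfun.pconst)
next
  case (insert k0 K)
  obtain q p where q: "q \<in> polyfun n" "\<forall>k\<in>K. p k \<in> polyfun n"
    "\<forall>x. admissible n S x \<longrightarrow> q x \<noteq> 0 \<and> (\<forall>k\<in>K. f k x = p k x / q x)"
    using insert.IH insert.prems by blast
  obtain p0 q0 where p0: "p0 \<in> polyfun n" "q0 \<in> polyfun n"
    "\<And>x. admissible n S x \<Longrightarrow> q0 x \<noteq> 0" "\<And>x. admissible n S x \<Longrightarrow> f k0 x = p0 x / q0 x"
    using rational_onE[OF insert.prems[of k0]] by blast
  define p' where "p' k = (if k = k0 then (\<lambda>x. p0 x * q x) else (\<lambda>x. p k x * q0 x))" for k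
  have "\<forall>k\<in>insert k0 K. p' k \<in> polyfun n"
    using p0 q by (auto simp: p'_def intro: polyfun.pmult)
  moreover have "q x * q0 x \<noteq> 0" and "f k x = p' k x / (q x * q0 x)"
    if "admissible n S x" "k \<in> insert k0 K" for x k
    using p0(3,4)[OF that(1)] q(3) that by (auto simp: p'_def)
  moreover have "(\<lambda>x. q x * q0 x) \<in> polyfun n"
    using p0 q by (auto intro: polyfun.pmult)
  ultimately show ?case
    by (intro bexI[of _ "\<lambda>x. q x * q0 x"] exI[of _ p']) blast+
qed

text \<open>Clearing a common denominator turns the rational relation into a polynomial linear
  system with more unknowns than equations.\<close>
lemma rational_on_linear_relation:
  assumes "finite I" "finite J" "card I < card J"
    and "\<And>t k. t \<in> I \<Longrightarrow> k \<in> J \<Longrightarrow> rational_on n S (f k t)"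
  shows "\<exists>\<alpha>. (\<forall>k\<in>J. \<alpha> k \<in> polyfun n) \<and> (\<exists>k\<in>J. \<exists>x. \<alpha> k x \<noteq> 0) \<and>
    (\<forall>t\<in>I. \<forall>x. admissible n S x \<longrightarrow> (\<Sum>k\<in>J. \<alpha> k x * f k t x) = 0)"
proof -
  have "\<exists>q\<in>polyfun n. \<exists>p. (\<forall>tk\<in>I \<times> J. p tk \<in> polyfun n) \<and> (\<forall>x. admissible n S x \<longrightarrow>
      q x \<noteq> 0 \<and> (\<forall>tk\<in>I \<times> J. (case tk of (t, k) \<Rightarrow> f k t) x = p tk x / q x))"
    by (rule rational_on_common_denominator) (use assms in auto)
  then obtain q p where p: "\<forall>tk\<in>I \<times> J. p tk \<in> polyfun n"
    and q: "\<forall>x. admissible n S x \<longrightarrow>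
      q x \<noteq> 0 \<and> (\<forall>tk\<in>I \<times> J. (case tk of (t, k) \<Rightarrow> f k t) x = p tk x / q x)"
    by blast
  obtain \<alpha> where \<alpha>: "\<forall>k\<in>J. \<alpha> k \<in> polyfun n" "\<exists>k\<in>J. \<exists>x. \<alpha> k x \<noteq> 0"
    and rel: "\<forall>t\<in>I. \<forall>x. (\<Sum>k\<in>J. p (t, k) x * \<alpha> k x) = 0"
    using polyfun_linear_system_nontrivial_solution[of I J "\<lambda>t k. p (t, k)" n] assms p by auto
  have "(\<Sum>k\<in>J. \<alpha> k x * f k t x) = 0" if "t \<in> I" "admissible n S x" for t x
  proof -
    have "(\<Sum>k\<in>J. \<alpha> k x * f k t x) = (\<Sum>k\<in>J. p (t, k) x * \<alpha> k x) / q x"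
      using q that by (auto simp: sum_divide_distrib intro!: sum.cong)
    then show ?thesis
      using rel that by simp
  qed
  with \<alpha> show ?thesis
    by blast
qed

section \<open>Multilinearity and bases\<close>

lemma ncycle_period_ge:
  assumes "is_ncycle n \<sigma>" "0 < p" "(\<sigma> ^^ p) 0 = 0"
  shows "n \<le> p"
proof -
  have "{..<n} = {(\<sigma> ^^ k) 0 | k. True}"
    using assms(1) unfolding is_ncycle_def by blast
  also have "\<dots> \<subseteq> (\<lambda>k. (\<sigma> ^^ k) 0) ` {..<p}"
    using funpow_mod_eq[of p \<sigma> 0] assms(2,3) by (auto intro!: image_eqI[of _ _ "_ mod p"])
  finally have "card {..<n} \<le> card ((\<lambda>k. (\<sigma> ^^ k) 0) ` {..<p})"
    by (intro card_mono) auto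
  also have "\<dots> \<le> p"
    using card_image_le[of "{..<p}"] by simp
  finally show ?thesis
    by simp
qed

lemma ncycle_orbit_list:
  assumes "is_ncycle n \<sigma>"
  shows "distinct (map (\<lambda>i. (\<sigma> ^^ i) 0) [1..<n+1])" and "set (map (\<lambda>i. (\<sigma> ^^ i) 0) [1..<n+1]) = {..<n}"
proof -
  have "inj \<sigma>"
    using assms permutes_inj unfolding is_ncycle_def by blast
  have "(\<sigma> ^^ a) 0 \<noteq> (\<sigma> ^^ b) 0" if "a < b" "a \<in> {1..<n+1}" "b \<in> {1..<n+1}" for a b
  proof
    assume "(\<sigma> ^^ a) 0 = (\<sigma> ^^ b) 0"
    then have "(\<sigma> ^^ a) 0 = (\<sigma> ^^ a) ((\<sigma> ^^ (b - a)) 0)"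
      using \<open>a < b\<close> by (metis funpow_add le_add_diff_inverse less_imp_le o_apply)
    then have "(\<sigma> ^^ (b - a)) 0 = 0"
      using inj_fn[OF \<open>inj \<sigma>\<close>, of a] by (simp add: inj_eq)
    then have "n \<le> b - a"
      using ncycle_period_ge[OF assms] \<open>a < b\<close> by simp
    then show False
      using that by auto
  qed
  then have "inj_on (\<lambda>i. (\<sigma> ^^ i) 0) {1..<n+1}"
    by (intro linorder_inj_onI') blast
  then show distinct: "distinct (map (\<lambda>i. (\<sigma> ^^ i) 0) [1..<n+1])"
    by (simp only: distinct_map distinct_upt set_upt simp_thms)
  have "set (map (\<lambda>i. (\<sigma> ^^ i) 0) [1..<n+1]) \<subseteq> {..<n}"
    using assms unfolding is_ncycle_def by auto
  moreover have "card {..<n} \<le> card (set (map (\<lambda>i. (\<sigma> ^^ i) 0) [1..<n+1]))"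
    using distinct_card[OF distinct] by simp
  ultimately show "set (map (\<lambda>i. (\<sigma> ^^ i) 0) [1..<n+1]) = {..<n}"
    by (intro card_seteq) auto
qed

lemma cscale_matrix_mult_left: "cscale c A ** X = cscale c (A ** X)"
  by (simp add: cscale_def matrix_matrix_mult_def vec_eq_iff sum_distrib_left mult.assoc)

lemma cscale_matrix_mult_right: "X ** cscale c A = cscale c (X ** A)"
  by (simp add: cscale_def matrix_matrix_mult_def vec_eq_iff sum_distrib_left algebra_simps)

lemma matrix_mult_sum_left: "(\<Sum>l\<in>A. F l) ** (X :: 'r::finite cmat) = (\<Sum>l\<in>A. F l ** X)"
  by (simp add: matrix_matrix_mult_def vec_eq_iff sum_distrib_right sum_component)
    (intro allI sum.swap)

lemma matrix_mult_sum_right: "(X :: 'r::finite cmat) ** (\<Sum>l\<in>A. F l) = (\<Sum>l\<in>A. X ** F l)"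
  by (simp add: matrix_matrix_mult_def vec_eq_iff sum_distrib_left sum_component)
    (intro allI sum.swap)

lemma trace_cscale: "trace (cscale c A) = c * trace A"
  by (simp add: trace_def cscale_def sum_distrib_left)

lemma trace_sum: "trace (\<Sum>l\<in>A. F l :: 'r::finite cmat) = (\<Sum>l\<in>A. trace (F l))"
  by (simp add: trace_def sum_component) (rule sum.swap)

lemma mprod_list_Cons: "mprod_list (A # As) = A ** mprod_list As"
  by (simp add: mprod_list_def)

lemma mprod_list_slot_linear:
  assumes "distinct L" "j \<in> set L"
  shows "mprod_list (map (M(j := \<Sum>l\<in>A. cscale (c l) (X l))) L)
    = (\<Sum>l\<in>A. cscale (c l) (mprod_list (map (M(j := X l)) L)))"
  using assms
proof (induction L)
  case Nil
  then show ?case by simp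
next
  case (Cons a L)
  show ?case
  proof (cases "a = j")
    case True
    then have "map (M(j := Y)) L = map M L" for Y
      using Cons.prems by (intro map_cong) auto
    with True show ?thesis
      by (simp only: list.map fun_upd_same mprod_list_Cons matrix_mult_sum_left
          cscale_matrix_mult_left)
  next
    case False
    then have "mprod_list (map (M(j := \<Sum>l\<in>A. cscale (c l) (X l))) (a # L))
        = M a ** mprod_list (map (M(j := \<Sum>l\<in>A. cscale (c l) (X l))) L)"
      by (simp add: mprod_list_Cons)
    also have "\<dots> = M a ** (\<Sum>l\<in>A. cscale (c l) (mprod_list (map (M(j := X l)) L)))"
      by (subst Cons.IH) (use Cons.prems False in simp_all)
    also have "\<dots> = (\<Sum>l\<in>A. cscale (c l) (mprod_list (map (M(j := X l)) (a # L))))"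
      using False by (simp add: mprod_list_Cons matrix_mult_sum_right cscale_matrix_mult_right)
    finally show ?thesis .
  qed
qed

lemma Q0_slot_linear:
  fixes M :: "nat \<Rightarrow> 'r::finite cmat"
  assumes "j < n"
  shows "Q0 n x (M(j := \<Sum>l\<in>A. cscale (c l) (X l))) = (\<Sum>l\<in>A. c l * Q0 n x (M(j := X l)))"
proof -
  define summand where "summand N \<sigma> = of_int (sign \<sigma>) *
      trace (mprod_list (map (\<lambda>i. N ((\<sigma> ^^ i) 0)) [1..<n+1])) / (\<Prod>i<n. x i - x (\<sigma> i))"
    for N :: "nat \<Rightarrow> 'r cmat" and \<sigma>
  have Q0_eq: "Q0 n x N = (\<Sum>\<sigma>\<in>{\<sigma>. is_ncycle n \<sigma>}. summand N \<sigma>)" for N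
    unfolding Q0_def summand_def ..
  have "summand (M(j := \<Sum>l\<in>A. cscale (c l) (X l))) \<sigma> = (\<Sum>l\<in>A. c l * summand (M(j := X l)) \<sigma>)"
    if "is_ncycle n \<sigma>" for \<sigma>
  proof -
    have "trace (mprod_list (map (\<lambda>i. (M(j := \<Sum>l\<in>A. cscale (c l) (X l))) ((\<sigma> ^^ i) 0)) [1..<n+1]))
      = (\<Sum>l\<in>A. c l * trace (mprod_list (map (\<lambda>i. (M(j := X l)) ((\<sigma> ^^ i) 0)) [1..<n+1])))"
      using mprod_list_slot_linear[OF ncycle_orbit_list(1)[OF that], of j M c X A]
        ncycle_orbit_list(2)[OF that] assms
      by (simp add: trace_sum trace_cscale comp_def del: upt_Suc)
    then show ?thesis
      unfolding summand_def by (simp add: sum_distrib_left sum_divide_distrib ac_simps del: upt_Suc)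
  qed
  then have "Q0 n x (M(j := \<Sum>l\<in>A. cscale (c l) (X l)))
      = (\<Sum>\<sigma>\<in>{\<sigma>. is_ncycle n \<sigma>}. \<Sum>l\<in>A. c l * summand (M(j := X l)) \<sigma>)"
    unfolding Q0_eq by (intro sum.cong) auto
  also have "\<dots> = (\<Sum>l\<in>A. c l * Q0 n x (M(j := X l)))"
    unfolding Q0_eq sum_distrib_left by (rule sum.swap)
  finally show ?thesis .
qed

lemma Q0_cong: "(\<And>i. i < n \<Longrightarrow> M i = M' i) \<Longrightarrow> Q0 n x M = Q0 n x M'"
  unfolding Q0_def is_ncycle_def
  by (intro sum.cong refl arg_cong2[where f = "(/)"] arg_cong2[where f = "(*)"] arg_cong[where f = trace]
      arg_cong[where f = mprod_list] map_cong) auto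

lemma Qtilde_cong: "(\<And>i. i < n \<Longrightarrow> M i = M' i) \<Longrightarrow> Qtilde R N k n x M = Qtilde R N k n x M'"
  unfolding Qtilde_def by (rule Q0_cong) simp

lemma Qtilde_slot_linear:
  assumes "j < n"
  shows "Qtilde R N k n x (M(j := \<Sum>l\<in>A. cscale (c l) (X l)))
    = (\<Sum>l\<in>A. c l * Qtilde R N k n x (M(j := X l)))"
proof -
  let ?P = "\<lambda>i. Rprod R N k (x i)"
  have conj_upd: "(\<lambda>i. ?P i ** (M(j := Y)) i ** matrix_inv (?P i))
      = (\<lambda>i. ?P i ** M i ** matrix_inv (?P i))(j := ?P j ** Y ** matrix_inv (?P j))" for Y
    by auto
  have "?P j ** (\<Sum>l\<in>A. cscale (c l) (X l)) ** matrix_inv (?P j)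
      = (\<Sum>l\<in>A. cscale (c l) (?P j ** X l ** matrix_inv (?P j)))"
    by (simp add: matrix_mult_sum_left matrix_mult_sum_right cscale_matrix_mult_left
        cscale_matrix_mult_right)
  then show ?thesis
    unfolding Qtilde_def conj_upd using Q0_slot_linear[OF assms] by simp
qed

lemma multilinear_vanishes_on_span:
  fixes \<Phi> :: "(nat \<Rightarrow> 'v::comm_monoid_add) \<Rightarrow> 'k::comm_semiring_0"
    and sc :: "'k \<Rightarrow> 'v \<Rightarrow> 'v"
  assumes linear: "\<And>N j c. j < n \<Longrightarrow> \<Phi> (N(j := \<Sum>v\<in>B. sc (c v) v)) = (\<Sum>v\<in>B. c v * \<Phi> (N(j := v)))"
    and basis: "\<And>N. (\<And>i. i < n \<Longrightarrow> N i \<in> B) \<Longrightarrow> \<Phi> N = 0"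
    and span: "\<And>A. A \<in> g \<Longrightarrow> \<exists>c. A = (\<Sum>v\<in>B. sc (c v) v)"
    and M: "\<And>i. i < n \<Longrightarrow> M i \<in> g"
  shows "\<Phi> M = 0"
proof -
  have vanish: "\<Phi> N = 0" if "m \<le> n" "\<And>i. i < m \<Longrightarrow> N i \<in> g" "\<And>i. m \<le> i \<Longrightarrow> i < n \<Longrightarrow> N i \<in> B"
    for m N
    using that
  proof (induction m arbitrary: N)
    case 0
    show ?case
      by (rule basis) (use 0 in simp)
  next
    case (Suc m)
    obtain c where c: "N m = (\<Sum>v\<in>B. sc (c v) v)"
      using span[OF Suc.prems(2)[of m]] by blast
    have "\<Phi> (N(m := v)) = 0" if "v \<in> B" for v
      by (rule Suc.IH) (use Suc.prems that in \<open>auto simp: less_Suc_eq\<close>)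
    then have "(\<Sum>v\<in>B. c v * \<Phi> (N(m := v))) = 0"
      by simp
    moreover have "\<Phi> N = \<Phi> (N(m := \<Sum>v\<in>B. sc (c v) v))"
      by (simp flip: c)
    ultimately show ?case
      using linear Suc.prems(1) by simp
  qed
  show ?thesis
    by (rule vanish[of n M]) (use M in auto)
qed

lemma vector_space_cscale: "vector_space (cscale :: complex \<Rightarrow> 'r::finite cmat \<Rightarrow> 'r cmat)"
  unfolding vector_space_def cscale_def by (auto simp: vec_eq_iff algebra_simps)

definition matrix_unit :: "'r::finite \<Rightarrow> 'r \<Rightarrow> 'r cmat" where
  "matrix_unit a b = (\<chi> i j. if i = a \<and> j = b then 1 else 0)"

lemma matrix_unit_expansion:
  "A = (\<Sum>ab\<in>UNIV. cscale (A $ fst ab $ snd ab) (matrix_unit (fst ab) (snd ab)))"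
proof -
  have "(\<Sum>ab\<in>UNIV. A $ fst ab $ snd ab * matrix_unit (fst ab) (snd ab) $ i $ j)
      = (\<Sum>ab\<in>UNIV. if ab = (i, j) then A $ i $ j else 0)" for i j
    by (intro sum.cong) (auto simp: matrix_unit_def)
  then show ?thesis
    by (simp add: vec_eq_iff cscale_def sum_component)
qed

lemma cdim_spanning_set:
  fixes g :: "'r::finite cmat set"
  obtains B where "finite B" "card B = cdim g" "\<And>A. A \<in> g \<Longrightarrow> \<exists>c. A = (\<Sum>v\<in>B. cscale (c v) v)"
proof -
  interpret cmat: vector_space "cscale :: complex \<Rightarrow> 'r cmat \<Rightarrow> 'r cmat"
    by (rule vector_space_cscale)
  obtain B where B: "B \<subseteq> g" "\<not> cmat.dependent B" "g \<subseteq> cmat.span B" "card B = cmat.dim g"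
    by (rule cmat.basis_exists)
  let ?E = "range (\<lambda>ab. matrix_unit (fst ab) (snd ab))"
  have "A \<in> cmat.span ?E" for A :: "'r cmat"
  proof -
    have "(\<Sum>ab\<in>UNIV. cscale (A $ fst ab $ snd ab) (matrix_unit (fst ab) (snd ab))) \<in> cmat.span ?E"
      by (intro cmat.span_sum cmat.span_scale cmat.span_base rangeI)
    then show ?thesis
      by (simp flip: matrix_unit_expansion)
  qed
  then have "B \<subseteq> cmat.span ?E"
    by blast
  have "finite B"
    using cmat.independent_span_bound[OF finite_imageI[OF finite] B(2) \<open>B \<subseteq> cmat.span ?E\<close>]
    by (rule conjunct1)
  have "\<exists>c. A = (\<Sum>v\<in>B. cscale (c v) v)" if "A \<in> g" for A
  proof -
    have "A \<in> cmat.span B"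
      using B(3) that by blast
    then show ?thesis
      unfolding cmat.span_finite[OF \<open>finite B\<close>] by blast
  qed
  moreover have "card B = cdim g"
    using B(4) by (simp add: cdim_def)
  ultimately show ?thesis
    using \<open>finite B\<close> that by blast
qed

lemma Qtilde_rational_on:
  fixes R :: "int \<Rightarrow> complex \<Rightarrow> 'r::finite cmat"
  assumes "\<And>m. rational_invertible (R m)"
  obtains S where "finite S" "\<forall>k\<le>K. \<forall>y. y \<notin> S \<longrightarrow> invertible (Rprod R N k y)"
    "\<forall>k\<le>K. \<forall>M. rational_on n S (\<lambda>x. Qtilde R N k n x M)"
proof -
  have "\<forall>k. \<exists>F. finite F \<and> (\<forall>y. y \<notin> F \<longrightarrow> invertible (Rprod R N k y)) \<and>
      (\<forall>S M. F \<subseteq> S \<longrightarrow> rational_on n S (\<lambda>x. Qtilde R N k n x M))"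
  proof
    fix k
    show "\<exists>F. finite F \<and> (\<forall>y. y \<notin> F \<longrightarrow> invertible (Rprod R N k y)) \<and>
      (\<forall>S M. F \<subseteq> S \<longrightarrow> rational_on n S (\<lambda>x. Qtilde R N k n x M))"
      unfolding Qtilde_def by (rule rational_on_Q0_conj[OF rational_invertible_Rprod[OF assms]])
  qed
  then obtain F where F: "\<forall>k. finite (F k) \<and> (\<forall>y. y \<notin> F k \<longrightarrow> invertible (Rprod R N k y)) \<and>
      (\<forall>S M. F k \<subseteq> S \<longrightarrow> rational_on n S (\<lambda>x. Qtilde R N k n x M))"
    by (rule choice[THEN exE])
  have "F k \<subseteq> (\<Union>k\<le>K. F k)" if "k \<le> K" for k
    using that by auto
  with F show ?thesis
    by (intro that[of "\<Union>k\<le>K. F k"]) auto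
qed

lemma Qtilde_combination_vanishes_on_span:
  assumes span: "\<And>A. A \<in> g \<Longrightarrow> \<exists>c. A = (\<Sum>v\<in>B. cscale (c v) v)"
    and basis: "\<And>M. (\<And>i. i < n \<Longrightarrow> M i \<in> B) \<Longrightarrow> (\<Sum>k\<le>K. \<alpha> k * Qtilde R N k n x M) = 0"
    and "\<forall>i<n. M i \<in> g"
  shows "(\<Sum>k\<le>K. \<alpha> k * Qtilde R N k n x M) = 0"
proof (rule multilinear_vanishes_on_span[where sc = cscale and M = M])
  fix M' j c assume "j < n"
  then show "(\<Sum>k\<le>K. \<alpha> k * Qtilde R N k n x (M'(j := \<Sum>v\<in>B. cscale (c v) v)))
      = (\<Sum>v\<in>B. c v * (\<Sum>k\<le>K. \<alpha> k * Qtilde R N k n x (M'(j := v))))"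
    using Qtilde_slot_linear[of j n R N k x M' c "\<lambda>v. v" B for k]
    by (simp add: sum_distrib_left ac_simps sum.swap[of _ B])
next
  fix M' assume "\<And>i. i < n \<Longrightarrow> M' i \<in> B"
  then show "(\<Sum>k\<le>K. \<alpha> k * Qtilde R N k n x M') = 0"
    by (rule basis)
next
  show "\<exists>c. A = (\<Sum>v\<in>B. cscale (c v) v)" if "A \<in> g" for A
    using span that .
next
  show "M i \<in> g" if "i < n" for i
    using assms(3) that by blast
qed

lemma Qtilde_polynomial_relation:
  fixes R :: "int \<Rightarrow> complex \<Rightarrow> 'r::finite cmat" and g :: "'r cmat set"
  assumes R: "\<And>m. rational_invertible (R m)"
    and B: "finite B" "card B = d" "\<And>A. A \<in> g \<Longrightarrow> \<exists>c. A = (\<Sum>v\<in>B. cscale (c v) v)"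
  obtains \<alpha> S where "\<forall>k\<le>d ^ n. \<alpha> k \<in> polyfun n" "\<exists>k\<le>d ^ n. \<exists>x. \<alpha> k x \<noteq> 0"
    "finite S" "\<forall>k\<le>d ^ n. \<forall>y. y \<notin> S \<longrightarrow> invertible (Rprod R N k y)"
    "\<forall>x M. admissible n S x \<longrightarrow> (\<forall>i<n. M i \<in> g) \<longrightarrow> (\<Sum>k\<le>d ^ n. \<alpha> k x * Qtilde R N k n x M) = 0"
proof -
  obtain S where S: "finite S" "\<forall>k\<le>d ^ n. \<forall>y. y \<notin> S \<longrightarrow> invertible (Rprod R N k y)"
    "\<forall>k\<le>d ^ n. \<forall>M. rational_on n S (\<lambda>x. Qtilde R N k n x M)"
    by (rule Qtilde_rational_on[OF R, where K = "d ^ n"])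
  define I where "I = PiE {..<n} (\<lambda>_. B)"
  have I: "finite I" "card I < card {..d ^ n}"
    using B(1,2) by (simp_all add: I_def finite_PiE card_PiE)
  have "\<exists>\<alpha>. (\<forall>k\<in>{..d ^ n}. \<alpha> k \<in> polyfun n) \<and> (\<exists>k\<in>{..d ^ n}. \<exists>x. \<alpha> k x \<noteq> 0) \<and>
      (\<forall>t\<in>I. \<forall>x. admissible n S x \<longrightarrow> (\<Sum>k\<le>d ^ n. \<alpha> k x * Qtilde R N k n x t) = 0)"
    by (rule rational_on_linear_relation[OF I(1) finite_atMost I(2)]) (use S(3) in simp)
  then obtain \<alpha> where \<alpha>: "\<forall>k\<le>d ^ n. \<alpha> k \<in> polyfun n" "\<exists>k\<le>d ^ n. \<exists>x. \<alpha> k x \<noteq> 0"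
    and rel: "\<forall>t\<in>I. \<forall>x. admissible n S x \<longrightarrow> (\<Sum>k\<le>d ^ n. \<alpha> k x * Qtilde R N k n x t) = 0"
    by (auto simp: atMost_iff)
  have "\<forall>x M. admissible n S x \<longrightarrow> (\<forall>i<n. M i \<in> g) \<longrightarrow> (\<Sum>k\<le>d ^ n. \<alpha> k x * Qtilde R N k n x M) = 0"
  proof (intro allI impI)
    fix x M assume adm: "admissible n S x" and Mg: "\<forall>i<n. M i \<in> g"
    show "(\<Sum>k\<le>d ^ n. \<alpha> k x * Qtilde R N k n x M) = 0"
    proof (rule Qtilde_combination_vanishes_on_span[OF B(3) _ Mg])
      fix M' assume "\<And>i. i < n \<Longrightarrow> M' i \<in> B"
      then have "restrict M' {..<n} \<in> I"
        by (simp add: I_def)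
      moreover have "Qtilde R N k n x M' = Qtilde R N k n x (restrict M' {..<n})" for k
        by (rule Qtilde_cong) simp
      ultimately show "(\<Sum>k\<le>d ^ n. \<alpha> k x * Qtilde R N k n x M') = 0"
        using rel adm by simp
    qed
  qed
  then show ?thesis
    by (rule that[OF \<alpha> S(1,2)])
qed

lemma Psi_Rprod:
  assumes "\<forall>m. \<forall>y\<in>U m \<inter> U (m + 1). \<Psi> (m + 1) y = R m y ** \<Psi> m y"
    and "\<forall>j\<le>k. y \<in> U (N + int j)"
  shows "\<Psi> (N + int k) y = Rprod R N k y ** (\<Psi> N y :: 'r::finite cmat)"
  using assms(2)
proof (induction k)
  case 0
  then show ?case by simp
next
  case (Suc k)
  have "y \<in> U (N + int k)" "y \<in> U (N + int k + 1)"
    using Suc.prems[rule_format, of k] Suc.prems[rule_format, of "Suc k"] by (simp_all add: ac_simps)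
  then have "\<Psi> (N + int k + 1) y = R (N + int k) y ** \<Psi> (N + int k) y"
    using assms(1) by blast
  moreover have "N + int (Suc k) = N + int k + 1"
    by simp
  ultimately have "\<Psi> (N + int (Suc k)) y = R (N + int k) y ** \<Psi> (N + int k) y"
    by (simp only:)
  then show ?case
    using Suc by (simp add: matrix_mul_assoc)
qed

lemma Mfun_Rprod:
  assumes "\<forall>m. \<forall>y\<in>U m \<inter> U (m + 1). \<Psi> (m + 1) y = R m y ** \<Psi> m y"
    and "\<forall>j\<le>k. y \<in> U (N + int j)" "invertible (\<Psi> N y)" "invertible (Rprod R N k y)"
  shows "Mfun \<Psi> (N + int k) y E = Rprod R N k y ** Mfun \<Psi> N y E ** matrix_inv (Rprod R N k y)"
  using assms by (simp add: Mfun_def Psi_Rprod matrix_inv_mult matrix_mul_assoc)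

lemma Wn_eq_Qtilde:
  assumes "\<forall>m. \<forall>y\<in>U m \<inter> U (m + 1). \<Psi> (m + 1) y = R m y ** \<Psi> m y"
    and "\<And>i j. i < n \<Longrightarrow> j \<le> k \<Longrightarrow> x i \<in> U (N + int j)"
    and "\<And>i. i < n \<Longrightarrow> invertible (\<Psi> N (x i)) \<and> invertible (Rprod R N k (x i))"
  shows "Wn \<Psi> (N + int k) n x E = Qtilde R N k n x (\<lambda>i. Mfun \<Psi> N (x i) (E i))"
  unfolding Wn_def Qtilde_def using assms by (intro Q0_cong Mfun_Rprod) auto

theorem mainTheorem9:
  fixes G :: "'r::finite cmat set" and g :: "'r cmat set"
    and D R \<Psi> :: "int \<Rightarrow> complex \<Rightarrow> 'r cmat"
    and U :: "int \<Rightarrow> complex set"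
    and N :: int and n :: nat
  assumes n2: "n \<ge> 2"
    and g_red: "reductive_lie_algebra g"
    and G_inv: "\<forall>A\<in>G. invertible A"
    and G_Ad: "\<forall>A\<in>G. \<forall>X\<in>g. A ** X ** matrix_inv A \<in> g"
    and U_open: "\<forall>m. open (U m)"
    and D_rat: "\<forall>m. rational_mat (D m)"
    and D_g: "\<forall>m. \<forall>x\<in>U m. D m x \<in> g"
    and Psi_G: "\<forall>m. \<forall>x\<in>U m. \<Psi> m x \<in> G \<and> invertible (\<Psi> m x)"
    and Psi_ode: "\<forall>m. \<forall>x\<in>U m. \<forall>i j.
        ((\<lambda>y. \<Psi> m y $ i $ j) has_field_derivative (D m x ** \<Psi> m x) $ i $ j) (at x)"
    and R_rat: "\<forall>m. rational_mat (R m) \<and>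
        (\<exists>S. rational_mat S \<and> finite {x. R m x ** S x \<noteq> mat 1})"
    and Psi_R: "\<forall>m. \<forall>x\<in>U m \<inter> U (m + 1). \<Psi> (m + 1) x = R m x ** \<Psi> m x"
  shows "\<exists>\<alpha> :: nat \<Rightarrow> (nat \<Rightarrow> complex) \<Rightarrow> complex.
     (\<forall>k\<le>cdim g ^ n. \<alpha> k \<in> polyfun n) \<and>
     (\<exists>k\<le>cdim g ^ n. \<exists>x. \<alpha> k x \<noteq> 0) \<and>
     (\<exists>S::complex set. finite S \<and>
        (\<forall>x M. (\<forall>i<n. \<forall>j<n. i \<noteq> j \<longrightarrow> x i \<noteq> x j) \<and> (\<forall>i<n. x i \<notin> S) \<and> (\<forall>i<n. M i \<in> g)
            \<longrightarrow> (\<Sum>k\<le>cdim g ^ n. \<alpha> k x * Qtilde R N k n x M) = 0) \<and>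
        (\<forall>x E. (\<forall>i<n. \<forall>j<n. i \<noteq> j \<longrightarrow> x i \<noteq> x j) \<and> (\<forall>i<n. x i \<notin> S)
               \<and> (\<forall>i<n. \<forall>k\<le>cdim g ^ n. x i \<in> U (N + int k)) \<and> (\<forall>i<n. E i \<in> g)
            \<longrightarrow> (\<Sum>k\<le>cdim g ^ n. \<alpha> k x * Wn \<Psi> (N + int k) n x E) = 0))"
proof -
  obtain B where B: "finite B" "card B = cdim g" "\<And>A. A \<in> g \<Longrightarrow> \<exists>c. A = (\<Sum>v\<in>B. cscale (c v) v)"
    using cdim_spanning_set[of g] by blast
  have R: "rational_invertible (R m)" for m
    using R_rat rational_invertible_if_right_inverse by blast
  obtain \<alpha> S where \<alpha>: "\<forall>k\<le>cdim g ^ n. \<alpha> k \<in> polyfun n" "\<exists>k\<le>cdim g ^ n. \<exists>x. \<alpha> k x \<noteq> 0"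
    and S: "finite S" "\<forall>k\<le>cdim g ^ n. \<forall>y. y \<notin> S \<longrightarrow> invertible (Rprod R N k y)"
    and rel: "\<forall>x M. admissible n S x \<longrightarrow> (\<forall>i<n. M i \<in> g) \<longrightarrow>
      (\<Sum>k\<le>cdim g ^ n. \<alpha> k x * Qtilde R N k n x M) = 0"
    by (rule Qtilde_polynomial_relation[OF R B])
  show ?thesis
  proof (intro exI[of _ \<alpha>] exI[of _ S] conjI \<alpha> S(1) allI impI)
    fix x M
    assume "(\<forall>i<n. \<forall>j<n. i \<noteq> j \<longrightarrow> x i \<noteq> x j) \<and> (\<forall>i<n. x i \<notin> S) \<and> (\<forall>i<n. M i \<in> g)"
    then show "(\<Sum>k\<le>cdim g ^ n. \<alpha> k x * Qtilde R N k n x M) = 0"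
      using rel by (simp add: admissible_def)
  next
    fix x E
    assume H: "(\<forall>i<n. \<forall>j<n. i \<noteq> j \<longrightarrow> x i \<noteq> x j) \<and> (\<forall>i<n. x i \<notin> S)
      \<and> (\<forall>i<n. \<forall>k\<le>cdim g ^ n. x i \<in> U (N + int k)) \<and> (\<forall>i<n. E i \<in> g)"
    then have xN: "x i \<in> U N" if "i < n" for i
      using that by (metis add_0_right of_nat_0 zero_le)
    have "Wn \<Psi> (N + int k) n x E = Qtilde R N k n x (\<lambda>i. Mfun \<Psi> N (x i) (E i))"
      if "k \<le> cdim g ^ n" for k
      using H that Psi_G S(2) xN by (intro Wn_eq_Qtilde[OF Psi_R]) auto
    moreover have "Mfun \<Psi> N (x i) (E i) \<in> g" if "i < n" for i
      using G_Ad Psi_G H xN that unfolding Mfun_def by blast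
    ultimately show "(\<Sum>k\<le>cdim g ^ n. \<alpha> k x * Wn \<Psi> (N + int k) n x E) = 0"
      using rel H by (simp add: admissible_def)
  qed
qed

end
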